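(* There exists a finite planar graph $G$ such that the vertices of $G$ cannot be non-repetitively coloured using fewer than seven colours; that is, every non-repetitive vertex colouring of $G$ uses at least seven colours.
   Context: A finite sequence $a_1a_2\cdots a_n$ is called non-repetitive if it contains no two identical adjacent blocks, i.e. there are no $i$ and $m\ge 1$ with $i+2m-1\le n$ and $a_{i+j}=a_{i+m+j}$ for all $0\le j<m$. A vertex colouring of a graph $G$ is called non-repetitive if for every path $v_1v_2\cdots v_n$ in $G$ with distinct vertices, the sequence of colours of $v_1,\dots,v_n$ is non-repetitive. *)

theory Defs
  imports "HOL-Analysis.Analysis"
begin

definition finite_simple_graph :: "'a set \<Rightarrow> 'a set set \<Rightarrow> bool" where
  "finite_simple_graph V E \<longleftrightarrow> finite V \<and> (\<forall>e\<in>E. e \<subseteq> V \<and> card e = 2)"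

definition planar :: "'a set \<Rightarrow> 'a set set \<Rightarrow> bool" where
  "planar V E \<longleftrightarrow>
     (\<exists>(p :: 'a \<Rightarrow> real^2) (\<gamma> :: 'a set \<Rightarrow> real \<Rightarrow> real^2).
        inj_on p V \<and>
        (\<forall>e\<in>E. arc (\<gamma> e) \<and> {pathstart (\<gamma> e), pathfinish (\<gamma> e)} = p ` e \<and>
                 (\<forall>v\<in>V. p v \<in> path_image (\<gamma> e) \<longrightarrow> v \<in> e)) \<and>
        (\<forall>e\<in>E. \<forall>f\<in>E. e \<noteq> f \<longrightarrow> path_image (\<gamma> e) \<inter> path_image (\<gamma> f) \<subseteq> p ` (e \<inter> f)))"

definition nonrepetitive_seq :: "'c list \<Rightarrow> bool" where
  "nonrepetitive_seq xs \<longleftrightarrow>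
     \<not> (\<exists>i m. m \<ge> 1 \<and> i + 2 * m \<le> length xs \<and>
              (\<forall>j<m. xs ! (i + j) = xs ! (i + m + j)))"

definition graph_path :: "'a set \<Rightarrow> 'a set set \<Rightarrow> 'a list \<Rightarrow> bool" where
  "graph_path V E vs \<longleftrightarrow> vs \<noteq> [] \<and> set vs \<subseteq> V \<and> distinct vs \<and>
     (\<forall>i. Suc i < length vs \<longrightarrow> {vs ! i, vs ! Suc i} \<in> E)"

definition nonrepetitive_colouring :: "'a set \<Rightarrow> 'a set set \<Rightarrow> ('a \<Rightarrow> 'c) \<Rightarrow> bool" where
  "nonrepetitive_colouring V E c \<longleftrightarrow>
     (\<forall>vs. graph_path V E vs \<longrightarrow> nonrepetitive_seq (map c vs))"

end

theory Submission
  imports Defs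
begin

(*
  Join two adjacent poles 0 and 1 to five hubs, and give each hub h a gadget: an apex h+1
  and a path h+2 h+3 h+4 h+5, all adjacent to h, with the apex adjacent to the whole path.
  If the hubs get five distinct colours, the poles add two more. Otherwise two hubs h and h'
  share a colour; then for each gadget vertex v of h and each pole p the path v h p h'
  forbids c v = c p, so the gadget avoids the three colours of 0, 1 and h. But the gadget
  needs four colours of its own: a path on four vertices needs three, since abab is a
  square, and the apex differs from all of them.
  Planarity is witnessed by a straight-line drawing on integer points, checked by evaluation.
*)

definition orientation :: "real^2 \<Rightarrow> real^2 \<Rightarrow> real^2 \<Rightarrow> real" where
  "orientation a b x = (b$1 - a$1) * (x$2 - a$2) - (b$2 - a$2) * (x$1 - a$1)"

lemma orientation_convex_combination:
  "orientation a b ((1 - u) *\<^sub>R x + u *\<^sub>R y) = (1 - u) * orientation a b x + u * orientation a b y"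
  unfolding orientation_def by (simp add: algebra_simps)

lemma orientation_degenerate [simp]: "orientation a b a = 0" "orientation a b b = 0"
  unfolding orientation_def by (simp_all add: algebra_simps)

lemma orientation_swap: "orientation b a x = - orientation a b x"
  unfolding orientation_def by (simp add: algebra_simps)

lemma orientation_closed_segment:
  assumes "x \<in> closed_segment a b"
  shows "orientation a b x = 0"
  using assms unfolding closed_segment_def by (auto simp: orientation_convex_combination)

lemma closed_segments_disjoint_if_same_side:
  assumes "0 < orientation a b c * orientation a b d"
  shows "closed_segment a b \<inter> closed_segment c d = {}"
proof -
  have "orientation a b x \<noteq> 0" if x: "x \<in> closed_segment c d" for x
  proof -
    obtain u where u: "0 \<le> u" "u \<le> 1" "x = (1 - u) *\<^sub>R c + u *\<^sub>R d"
      using x unfolding in_segment by blast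
    let ?c = "orientation a b c" and ?d = "orientation a b d"
    have x_orientation: "orientation a b x = (1 - u) * ?c + u * ?d"
      unfolding u(3) by (rule orientation_convex_combination)
    have "orientation a b x * ?c = (1 - u) * ?c\<^sup>2 + u * (?c * ?d)"
      unfolding x_orientation by (simp add: algebra_simps power2_eq_square)
    moreover have "0 < (1 - u) * ?c\<^sup>2 + u * (?c * ?d)"
    proof (cases "u = 1")
      case True
      then show ?thesis using assms by simp
    next
      case False
      have "?c \<noteq> 0" using assms by auto
      then have "0 < (1 - u) * ?c\<^sup>2" using u(2) False by simp
      moreover have "0 \<le> u * (?c * ?d)" using u(1) assms by simp
      ultimately show ?thesis by linarith
    qed
    ultimately show ?thesis by auto
  qed
  then show ?thesis using orientation_closed_segment by blast
qed

lemma closed_segments_common_endpoint: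
  assumes "orientation a b d \<noteq> 0"
  shows "closed_segment a b \<inter> closed_segment a d \<subseteq> {a}"
proof
  fix x assume x: "x \<in> closed_segment a b \<inter> closed_segment a d"
  then obtain u where u: "0 \<le> u" "u \<le> 1" "x = (1 - u) *\<^sub>R a + u *\<^sub>R d"
    unfolding closed_segment_def by auto
  have "u * orientation a b d = orientation a b x"
    using u(3) by (simp add: orientation_convex_combination)
  also have "\<dots> = 0"
    using x orientation_closed_segment by blast
  finally have "u = 0" using assms by simp
  then show "x \<in> {a}" using u(3) by simp
qed

lemma closed_segments_shared_endpoint:
  assumes "x \<in> {a, b}" "x \<in> {c, d}" "orientation a b c \<noteq> 0 \<or> orientation a b d \<noteq> 0"
  shows "closed_segment a b \<inter> closed_segment c d \<subseteq> {x}"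
proof -
  obtain y where y: "{a, b} = {x, y}" using assms(1) by blast
  obtain z where z: "{c, d} = {x, z}" using assms(2) by blast
  have same_segment: "closed_segment u v = closed_segment x w" if "{u, v} = {x, w}" for u v w
    using that by (metis closed_segment_commute doubleton_eq_iff)
  have "orientation a b x = 0" using assms(1) by auto
  then have "orientation a b z \<noteq> 0" using assms(3) z by (metis doubleton_eq_iff)
  then have "orientation x y z \<noteq> 0" using y by (metis doubleton_eq_iff neg_equal_0_iff_equal orientation_swap)
  then have "closed_segment x y \<inter> closed_segment x z \<subseteq> {x}"
    by (rule closed_segments_common_endpoint)
  then show ?thesis
    unfolding same_segment[OF y] same_segment[OF z] .
qed

lemma planar_if_straight_line_drawing:
  fixes p :: "'a \<Rightarrow> real^2"
  assumes graph: "finite_simple_graph V E" and inj: "inj_on p V"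
    and vertices_off_edges: "\<And>e v. e \<in> E \<Longrightarrow> v \<in> V \<Longrightarrow> p v \<in> convex hull (p ` e) \<Longrightarrow> v \<in> e"
    and edges_meet_at_ends:
      "\<And>e f. e \<in> E \<Longrightarrow> f \<in> E \<Longrightarrow> e \<noteq> f \<Longrightarrow> convex hull (p ` e) \<inter> convex hull (p ` f) \<subseteq> p ` (e \<inter> f)"
  shows "planar V E"
proof -
  have "\<forall>e\<in>E. \<exists>a b. e = {a, b} \<and> a \<noteq> b"
    using graph unfolding finite_simple_graph_def by (auto simp: card_2_iff)
  then obtain s t where st: "\<And>e. e \<in> E \<Longrightarrow> e = {s e, t e} \<and> s e \<noteq> t e"
    by metis
  define \<gamma> where "\<gamma> e = linepath (p (s e)) (p (t e))" for e
  have ends: "p ` e = {p (s e), p (t e)}" if "e \<in> E" for e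
    using st[OF that] by (metis image_empty image_insert)
  have image: "path_image (\<gamma> e) = convex hull (p ` e)" if "e \<in> E" for e
    using ends[OF that] by (simp add: \<gamma>_def segment_convex_hull)
  have "arc (\<gamma> e)" if "e \<in> E" for e
  proof -
    have "{s e, t e} \<subseteq> V" "s e \<noteq> t e"
      using st[OF that] that graph unfolding finite_simple_graph_def by auto
    then show ?thesis
      using inj by (simp add: \<gamma>_def inj_on_eq_iff)
  qed
  moreover have "{pathstart (\<gamma> e), pathfinish (\<gamma> e)} = p ` e" if "e \<in> E" for e
    using ends[OF that] by (simp add: \<gamma>_def)
  ultimately show ?thesis
    unfolding planar_def using inj vertices_off_edges edges_meet_at_ends image
    by (intro exI[of _ p] exI[of _ \<gamma>]) auto
qed

definition int_orientation :: "int \<times> int \<Rightarrow> int \<times> int \<Rightarrow> int \<times> int \<Rightarrow> int" where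
  "int_orientation P Q R = (fst Q - fst P) * (snd R - snd P) - (snd Q - snd P) * (fst R - fst P)"

definition lattice_point :: "int \<times> int \<Rightarrow> real^2" where
  "lattice_point P = vector [of_int (fst P), of_int (snd P)]"

lemma lattice_point_nth [simp]:
  "lattice_point P $ 1 = of_int (fst P)" "lattice_point P $ 2 = of_int (snd P)"
  by (simp_all add: lattice_point_def)

lemma inj_lattice_point: "inj lattice_point"
proof (rule injI)
  fix P Q assume "lattice_point P = lattice_point Q"
  then have "lattice_point P $ 1 = lattice_point Q $ 1" "lattice_point P $ 2 = lattice_point Q $ 2"
    by simp_all
  then show "P = Q" by (simp add: prod_eq_iff)
qed

lemma orientation_lattice_point:
  "orientation (lattice_point P) (lattice_point Q) (lattice_point R) = of_int (int_orientation P Q R)"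
  by (simp add: orientation_def int_orientation_def)

fun segments_apart :: "(int \<times> int) \<times> (int \<times> int) \<Rightarrow> (int \<times> int) \<times> (int \<times> int) \<Rightarrow> bool" where
  "segments_apart (A, B) (C, D) \<longleftrightarrow>
     (if A \<noteq> C \<and> A \<noteq> D \<and> B \<noteq> C \<and> B \<noteq> D
      then 0 < int_orientation A B C * int_orientation A B D \<or>
           0 < int_orientation C D A * int_orientation C D B
      else int_orientation A B C \<noteq> 0 \<or> int_orientation A B D \<noteq> 0)"

lemma closed_segments_apart:
  assumes "segments_apart (A, B) (C, D)"
  shows "closed_segment (lattice_point A) (lattice_point B) \<inter> closed_segment (lattice_point C) (lattice_point D)
           \<subseteq> lattice_point ` ({A, B} \<inter> {C, D})"
proof (cases "{A, B} \<inter> {C, D} = {}")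
  case True
  then have "0 < orientation (lattice_point A) (lattice_point B) (lattice_point C) *
                 orientation (lattice_point A) (lattice_point B) (lattice_point D) \<or>
             0 < orientation (lattice_point C) (lattice_point D) (lattice_point A) *
                 orientation (lattice_point C) (lattice_point D) (lattice_point B)"
    using True assms
    by (auto simp: orientation_lattice_point simp flip: of_int_mult split: if_split_asm)
  then show ?thesis
    using closed_segments_disjoint_if_same_side by blast
next
  case False
  then obtain P where P: "P \<in> {A, B}" "P \<in> {C, D}" by blast
  have "orientation (lattice_point A) (lattice_point B) (lattice_point C) \<noteq> 0 \<or>
        orientation (lattice_point A) (lattice_point B) (lattice_point D) \<noteq> 0"
    using False assms by (auto simp: orientation_lattice_point split: if_split_asm)
  then have "closed_segment (lattice_point A) (lattice_point B) \<inter>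
             closed_segment (lattice_point C) (lattice_point D) \<subseteq> {lattice_point P}"
    using P by (intro closed_segments_shared_endpoint) auto
  then show ?thesis using P by blast
qed

lemma sorted_wrt_distinct_elements:
  assumes "sorted_wrt R xs" "x \<in> set xs" "y \<in> set xs" "x \<noteq> y"
  shows "R x y \<or> R y x"
  using assms by (induction xs) auto

lemma nonrepetitive_seq_twoD:
  assumes "nonrepetitive_seq [x, y]"
  shows "x \<noteq> y"
proof
  assume "x = y"
  then have "\<forall>j<1. [x, y] ! (0 + j) = [x, y] ! (0 + 1 + j)" by simp
  moreover have "0 + 2 * 1 \<le> length [x, y]" by simp
  ultimately show False using assms unfolding nonrepetitive_seq_def by blast
qed

lemma nonrepetitive_seq_fourD:
  assumes "nonrepetitive_seq [w, x, y, z]"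
  shows "w \<noteq> x" "x \<noteq> y" "y \<noteq> z" "w \<noteq> y \<or> x \<noteq> z"
proof -
  have block: "\<not> (\<forall>j<m. [w, x, y, z] ! (i + j) = [w, x, y, z] ! (i + m + j))"
    if "1 \<le> m" "i + 2 * m \<le> 4" for i m
  proof -
    have "length [w, x, y, z] = 4" by simp
    then show ?thesis using assms that unfolding nonrepetitive_seq_def by metis
  qed
  show "w \<noteq> x" using block[of 1 0] by auto
  show "x \<noteq> y" using block[of 1 1] by auto
  show "y \<noteq> z" using block[of 1 2] by auto
  show "w \<noteq> y \<or> x \<noteq> z" using block[of 2 0] by (auto simp: less_2_cases_iff)
qed

lemma card_nonrepetitive_seq_four:
  assumes "nonrepetitive_seq [w, x, y, z]"
  shows "3 \<le> card {w, x, y, z}"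
proof -
  note neighbours = nonrepetitive_seq_fourD[OF assms]
  then consider "w \<noteq> y" | "x \<noteq> z" by blast
  then show ?thesis
  proof cases
    case 1
    then have "card {w, x, y} = 3" using neighbours by simp
    then show ?thesis using card_mono[of "{w, x, y, z}" "{w, x, y}"] by auto
  next
    case 2
    then have "card {x, y, z} = 3" using neighbours by simp
    then show ?thesis using card_mono[of "{w, x, y, z}" "{x, y, z}"] by auto
  qed
qed

lemma graph_path_Cons_Cons:
  "graph_path V E (a # b # vs) \<longleftrightarrow>
     {a, b} \<in> E \<and> a \<in> V \<and> a \<notin> set (b # vs) \<and> graph_path V E (b # vs)"
  unfolding graph_path_def by (simp add: All_less_Suc2) blast

lemma graph_path_singleton: "graph_path V E [a] \<longleftrightarrow> a \<in> V"
  unfolding graph_path_def by simp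

lemma finite_simple_graph_edgeD:
  assumes "finite_simple_graph V E" "{a, b} \<in> E"
  shows "a \<noteq> b" "a \<in> V" "b \<in> V"
proof -
  have "{a, b} \<subseteq> V" "card {a, b} = 2"
    using assms unfolding finite_simple_graph_def by auto
  then show "a \<noteq> b" "a \<in> V" "b \<in> V" by auto
qed

lemma nonrepetitive_colouring_edge:
  assumes "finite_simple_graph V E" "nonrepetitive_colouring V E c" "{a, b} \<in> E"
  shows "c a \<noteq> c b"
proof -
  have "graph_path V E [a, b]"
    using finite_simple_graph_edgeD[OF assms(1,3)] assms(3)
    by (simp add: graph_path_Cons_Cons graph_path_singleton)
  then show ?thesis
    using assms(2) nonrepetitive_seq_twoD unfolding nonrepetitive_colouring_def by fastforce
qed

lemma nonrepetitive_colouring_twins: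
  assumes graph: "finite_simple_graph V E" and colouring: "nonrepetitive_colouring V E c"
    and twins: "c n = c m" "n \<noteq> m"
    and edges: "{x, n} \<in> E" "{n, w} \<in> E" "{w, m} \<in> E"
    and distinct: "x \<noteq> w" "x \<noteq> m"
  shows "c x \<noteq> c w"
proof -
  note edge = finite_simple_graph_edgeD[OF graph]
  have "graph_path V E [x, n, w, m]"
    using edges edge[OF edges(1)] edge[OF edges(2)] edge[OF edges(3)] twins(2) distinct
    by (simp add: graph_path_Cons_Cons graph_path_singleton)
  then have "nonrepetitive_seq (map c [x, n, w, m])"
    using colouring unfolding nonrepetitive_colouring_def by blast
  then have "c x \<noteq> c w \<or> c n \<noteq> c m"
    using nonrepetitive_seq_fourD(4) by simp
  then show ?thesis
    using twins(1) by simp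
qed

lemma card_colours_fan:
  assumes graph: "finite_simple_graph V E" and colouring: "nonrepetitive_colouring V E c"
    and path: "graph_path V E [w, x, y, z]" and fan: "\<forall>v \<in> {w, x, y, z}. {a, v} \<in> E"
  shows "4 \<le> card (c ` {a, w, x, y, z})"
proof -
  define path_colours where "path_colours = {c w, c x, c y, c z}"
  have "nonrepetitive_seq (map c [w, x, y, z])"
    using colouring path unfolding nonrepetitive_colouring_def by blast
  then have "3 \<le> card path_colours"
    unfolding path_colours_def using card_nonrepetitive_seq_four by simp
  moreover have "c a \<notin> path_colours"
  proof -
    have "c a \<noteq> c v" if "v \<in> {w, x, y, z}" for v
      using fan that by (intro nonrepetitive_colouring_edge[OF graph colouring]) blast
    then show ?thesis unfolding path_colours_def by blast
  qed
  moreover have "c ` {a, w, x, y, z} = insert (c a) path_colours" "finite path_colours"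
    unfolding path_colours_def by simp_all
  ultimately show ?thesis by simp
qed

definition hub :: "nat \<Rightarrow> nat" where
  "hub i = 6 * i + 2"

definition gadget_edges :: "nat \<Rightarrow> (nat \<times> nat) list" where
  "gadget_edges h =
     [(0, h), (1, h)] @ [(h, h + k). k \<leftarrow> [1..<6]] @ [(h + 1, h + k). k \<leftarrow> [2..<6]] @
     [(h + k, h + k + 1). k \<leftarrow> [2..<5]]"

definition edges7 :: "(nat \<times> nat) list" where
  "edges7 = (0, 1) # concat (map (gadget_edges \<circ> hub) [0..<5])"

definition V7 :: "nat set" where
  "V7 = {0..<32}"

definition E7 :: "nat set set" where
  "E7 = (\<lambda>(a, b). {a, b}) ` set edges7"

(* The poles lie far above and below the x-axis; gadget i is drawn within a few units of
   the point (40 (i + 1), 0). *)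
definition coords7 :: "nat \<Rightarrow> int \<times> int" where
  "coords7 v =
     (if v = 0 then (0, 1000) else if v = 1 then (0, -1000)
      else let i = (v - 2) div 6; k = (v - 2) mod 6
           in (40 * int i + 40 + [0, 9, 4, 5, 5, 4] ! k, [0, 1, 2, 4, 6, 8] ! k))"

lemma edges7_ordered: "\<forall>(a, b) \<in> set edges7. a < b \<and> b < 32"
  by code_simp

lemma coords7_distinct: "distinct (map coords7 [0..<32])"
  by code_simp

lemma edges7_avoid_vertices:
  "\<forall>(a, b) \<in> set edges7. \<forall>v \<in> set [0..<32].
     v = a \<or> v = b \<or> int_orientation (coords7 a) (coords7 b) (coords7 v) \<noteq> 0"
  by code_simp

(* sorted_wrt tests every unordered pair of distinct edges once. *)
lemma edges7_apart: "sorted_wrt segments_apart (map (map_prod coords7 coords7) edges7)"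
  by code_simp

lemma edges7_endpoints: "(a, b) \<in> set edges7 \<Longrightarrow> a < b \<and> b \<in> V7"
  using edges7_ordered unfolding V7_def by auto

lemma E7_cases:
  assumes "e \<in> E7"
  obtains a b where "(a, b) \<in> set edges7" "e = {a, b}"
  using assms unfolding E7_def by force

lemma finite_simple_graph_V7_E7: "finite_simple_graph V7 E7"
  unfolding finite_simple_graph_def
proof (intro conjI ballI)
  show "finite V7" by (simp add: V7_def)
next
  fix e assume "e \<in> E7"
  then obtain a b where "(a, b) \<in> set edges7" "e = {a, b}" by (rule E7_cases)
  then show "e \<subseteq> V7" "card e = 2"
    using edges7_endpoints[of a b] unfolding V7_def by auto
qed

lemma inj_on_coords7: "inj_on coords7 V7"
  using coords7_distinct unfolding V7_def by (simp add: distinct_map)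

lemma planar_V7_E7: "planar V7 E7"
proof (rule planar_if_straight_line_drawing)
  let ?p = "lattice_point \<circ> coords7"
  have hull: "convex hull (?p ` {a, b}) = closed_segment (?p a) (?p b)" for a b
    by (simp add: segment_convex_hull)
  show "finite_simple_graph V7 E7" by (rule finite_simple_graph_V7_E7)
  show "inj_on ?p V7"
    using inj_on_coords7 inj_lattice_point by (simp add: comp_inj_on inj_on_subset)
  show "v \<in> e" if e: "e \<in> E7" and v: "v \<in> V7" "?p v \<in> convex hull (?p ` e)" for e v
  proof -
    obtain a b where ab: "(a, b) \<in> set edges7" "e = {a, b}"
      using e by (rule E7_cases)
    have "orientation (?p a) (?p b) (?p v) = 0"
      using v(2) ab(2) hull orientation_closed_segment by auto
    then have "int_orientation (coords7 a) (coords7 b) (coords7 v) = 0"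
      by (simp add: orientation_lattice_point)
    then show ?thesis
      using edges7_avoid_vertices ab v(1) unfolding V7_def by fastforce
  qed
  show "convex hull (?p ` e) \<inter> convex hull (?p ` f) \<subseteq> ?p ` (e \<inter> f)"
    if e: "e \<in> E7" and f: "f \<in> E7" and "e \<noteq> f" for e f
  proof -
    obtain a b where ab: "(a, b) \<in> set edges7" "e = {a, b}"
      using e by (rule E7_cases)
    obtain c d where cd: "(c, d) \<in> set edges7" "f = {c, d}"
      using f by (rule E7_cases)
    have in_V7: "a \<in> V7" "b \<in> V7" "c \<in> V7" "d \<in> V7"
      using edges7_endpoints ab(1) cd(1) unfolding V7_def by fastforce+
    let ?A = "coords7 a" and ?B = "coords7 b" and ?C = "coords7 c" and ?D = "coords7 d"
    have "(?A, ?B) \<noteq> (?C, ?D)"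
      using \<open>e \<noteq> f\<close> ab(2) cd(2) inj_on_coords7 in_V7 by (auto dest: inj_onD)
    then have "segments_apart (?A, ?B) (?C, ?D) \<or> segments_apart (?C, ?D) (?A, ?B)"
      using sorted_wrt_distinct_elements[OF edges7_apart] ab(1) cd(1) by fastforce
    then have "closed_segment (lattice_point ?A) (lattice_point ?B) \<inter>
               closed_segment (lattice_point ?C) (lattice_point ?D)
                 \<subseteq> lattice_point ` ({?A, ?B} \<inter> {?C, ?D})"
      using closed_segments_apart by blast
    moreover have "{?A, ?B} \<inter> {?C, ?D} = coords7 ` (e \<inter> f)"
      using ab(2) cd(2) inj_on_image_Int[OF inj_on_coords7] in_V7 by simp
    ultimately show ?thesis
      using ab(2) cd(2) hull by (simp add: image_comp)
  qed
qed

lemma gadget_edges_in_E7: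
  assumes "i < 5" "(a, b) \<in> set (gadget_edges (hub i))"
  shows "{a, b} \<in> E7"
proof -
  have "(a, b) \<in> set edges7"
    using assms unfolding edges7_def by auto
  then show ?thesis unfolding E7_def by force
qed

lemma E7_poles: "{0, 1} \<in> E7"
  unfolding E7_def edges7_def by force

lemma E7_pole_hub:
  assumes "i < 5"
  shows "{0, hub i} \<in> E7" "{1, hub i} \<in> E7"
  using gadget_edges_in_E7[OF assms] by (auto simp: gadget_edges_def)

lemma E7_hub_spoke:
  assumes "i < 5" "v \<in> {hub i + 1, hub i + 2, hub i + 3, hub i + 4, hub i + 5}"
  shows "{v, hub i} \<in> E7"
  using assms(2) gadget_edges_in_E7[OF assms(1)] by (auto simp: gadget_edges_def insert_commute)

lemma E7_apex_spoke:
  assumes "i < 5" "v \<in> {hub i + 2, hub i + 3, hub i + 4, hub i + 5}"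
  shows "{hub i + 1, v} \<in> E7"
  using assms(2) gadget_edges_in_E7[OF assms(1)] by (auto simp: gadget_edges_def)

lemma graph_path_gadget:
  assumes "i < 5"
  shows "graph_path V7 E7 [hub i + 2, hub i + 3, hub i + 4, hub i + 5]"
proof -
  have "{hub i + 2, hub i + 3} \<in> E7" "{hub i + 3, hub i + 4} \<in> E7" "{hub i + 4, hub i + 5} \<in> E7"
    using gadget_edges_in_E7[OF assms] by (auto simp: gadget_edges_def)
  moreover have "hub i + 5 \<in> V7"
    using assms unfolding hub_def V7_def by simp
  ultimately show ?thesis
    using finite_simple_graph_edgeD[OF finite_simple_graph_V7_E7]
    by (simp add: graph_path_Cons_Cons graph_path_singleton)
qed

lemma card_disjoint_Un_le:
  assumes "finite C" "A \<union> B \<subseteq> C" "A \<inter> B = {}"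
  shows "card A + card B \<le> card C"
  using assms by (metis card_Un_disjoint card_mono finite_Un finite_subset)

lemma seven_colours_if_hubs_share:
  assumes colouring: "nonrepetitive_colouring V7 E7 c"
    and ij: "i < 5" "j < 5" "i \<noteq> j" and same: "c (hub i) = c (hub j)"
  shows "7 \<le> card (c ` V7)"
proof -
  note graph = finite_simple_graph_V7_E7
  note edge_colours = nonrepetitive_colouring_edge[OF graph colouring]
  define gadget where "gadget = {hub i + 1, hub i + 2, hub i + 3, hub i + 4, hub i + 5}"
  define base where "base = {c 0, c 1, c (hub i)}"
  have "4 \<le> card (c ` gadget)"
    using card_colours_fan[OF graph colouring graph_path_gadget[OF ij(1)]] E7_apex_spoke[OF ij(1)]
    unfolding gadget_def by simp
  moreover have "card base = 3"
    using edge_colours[OF E7_poles] edge_colours[OF E7_pole_hub(1)[OF ij(1)]]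
      edge_colours[OF E7_pole_hub(2)[OF ij(1)]]
    unfolding base_def by simp
  moreover have "c v \<notin> base" if v: "v \<in> gadget" for v
  proof -
    have spoke: "{v, hub i} \<in> E7"
      using E7_hub_spoke[OF ij(1)] v unfolding gadget_def by blast
    have apart: "v \<noteq> 0" "v \<noteq> 1" "v \<noteq> hub j" "hub i \<noteq> hub j"
      using v ij unfolding gadget_def hub_def by auto
    have "c v \<noteq> c p" if "p \<in> {0, 1}" for p
      using nonrepetitive_colouring_twins[OF graph colouring same apart(4) spoke]
        E7_pole_hub[OF ij(1)] E7_pole_hub[OF ij(2)] apart that
      by (auto simp: insert_commute)
    moreover have "c v \<noteq> c (hub i)"
      using edge_colours[OF spoke] .
    ultimately show ?thesis unfolding base_def by auto
  qed
  moreover have "base \<union> c ` gadget \<subseteq> c ` V7"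
    using ij(1) unfolding base_def gadget_def V7_def hub_def by auto
  ultimately show ?thesis
    using card_disjoint_Un_le[of "c ` V7" base "c ` gadget"] unfolding V7_def by fastforce
qed

lemma seven_colours_if_hubs_distinct:
  assumes colouring: "nonrepetitive_colouring V7 E7 c" and distinct: "inj_on c (hub ` {..<5})"
  shows "7 \<le> card (c ` V7)"
proof -
  note edge_colours = nonrepetitive_colouring_edge[OF finite_simple_graph_V7_E7 colouring]
  have "inj hub" by (simp add: hub_def inj_def)
  then have "card (c ` hub ` {..<5}) = 5"
    using distinct by (simp add: card_image inj_on_subset)
  moreover have "c 0 \<noteq> c 1"
    by (rule edge_colours[OF E7_poles])
  moreover have "c 0 \<notin> c ` hub ` {..<5}" "c 1 \<notin> c ` hub ` {..<5}"
    using edge_colours E7_pole_hub by fastforce+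
  moreover have "{c 0, c 1} \<union> c ` hub ` {..<5} \<subseteq> c ` V7"
    unfolding V7_def hub_def by auto
  ultimately show ?thesis
    using card_disjoint_Un_le[of "c ` V7" "{c 0, c 1}" "c ` hub ` {..<5}"] unfolding V7_def by auto
qed

theorem theorem3:
  shows "\<exists>(V :: nat set) (E :: nat set set).
           finite_simple_graph V E \<and> planar V E \<and>
           (\<forall>c :: nat \<Rightarrow> nat. nonrepetitive_colouring V E c \<longrightarrow> card (c ` V) \<ge> 7)"
proof -
  have "7 \<le> card (c ` V7)" if colouring: "nonrepetitive_colouring V7 E7 c" for c :: "nat \<Rightarrow> nat"
  proof (cases "inj_on c (hub ` {..<5})")
    case True
    then show ?thesis by (rule seven_colours_if_hubs_distinct[OF colouring])
  next
    case False
    then obtain i j where "i < 5" "j < 5" "i \<noteq> j" "c (hub i) = c (hub j)"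
      unfolding inj_on_def by blast
    then show ?thesis by (rule seven_colours_if_hubs_share[OF colouring])
  qed
  then show ?thesis
    using finite_simple_graph_V7_E7 planar_V7_E7 by blast
qed

end
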